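(* Consider $\min_x F(x)=f(x)+r(x)$, $f=\frac1n\sum_{i=1}^nf_i$, each $f_i$ differentiable with $\|\nabla f_i(x)\|\le G_i$ and $\|\nabla f_i(x)-\nabla f_i(y)\|\le L_i\|x-y\|$, $r:\mathbb{R}^d\to\mathbb{R}$ possibly non-convex and non-smooth with existing proximal mapping, $F$ attaining its minimum $F(x^* )$, and $\tilde L=\frac1n\sum_iL_i>0$. Let two proper samplings be given: one (for the outer batches) with marginals $p'_i$, pair-probability matrix $\mathbf P'$ and a vector $v'$ with $\mathbf P'-p'p'^\top\preceq\mathrm{Diag}(p'_1v'_1,\dots,p'_nv'_n)$, and one (for the inner batches) with marginals $p_i$, matrix $\mathbf P$ and a vector $v$ with $\mathbf P-pp^\top\preceq\mathrm{Diag}(p_1v_1,\dots,p_nv_n)$. Let $Q=\sum_{i=1}^n\frac{v_iL_i^2}{p_in^2}$ and $Q'=\sum_{i=1}^n\frac{v'_iG_i^2}{p'_in^2}$. Run ProxSPIDER-AS with $\mathcal J$ outer loops, $m$ inner loops, initial point $\tilde x^1$ and stepsize $\eta=\frac{1}{4\tilde L+2mQ/\tilde L}$. Then $$\frac1{m\mathcal J}\sum_{j=1}^{\mathcal J}\sum_{t=1}^mE\big[\mathrm{dist}(0,\hat\partial F(x_{t+1}^{(j)}))^2\big]\le\frac1{m\mathcal J}\Big(24\tilde L+\frac{4mQ}{\tilde L}\Big)\Delta+2Q',$$ where $\Delta=F(\tilde x^1)-F(x^* )$.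
   Context: $\mathrm{prox}_{\eta r}(y)=\arg\min_x\{\frac1{2\eta}\|x-y\|^2+r(x)\}$ (nonempty; any element used). A sampling is a random subset $S\subseteq[n]$, with marginals $p_i=\mathrm{Prob}(i\in S)>0$ (proper) and $\mathbf P_{ij}=\mathrm{Prob}(\{i,j\}\subseteq S)$; $\preceq$ is the positive semidefinite order. ProxSPIDER-AS: for $j=1,\dots,\mathcal J$: $x_0^{(j)}=\tilde x^{(j)}$; draw $S^{(j)}$ from the outer sampling and set $\mathcal V_0^{(j)}=\sum_{i\in S^{(j)}}\frac1{np'_i}\nabla f_i(x_0^{(j)})$; $x_1^{(j)}=x_0^{(j)}$; for $t=1,\dots,m$: draw $S_t^{(j)}$ from the inner sampling, set $\mathcal V_t^{(j)}=\sum_{i\in S_t^{(j)}}\frac1{np_i}(\nabla f_i(x_t^{(j)})-\nabla f_i(x_{t-1}^{(j)}))+\mathcal V_{t-1}^{(j)}$ and $x_{t+1}^{(j)}\in\mathrm{prox}_{\eta r}(x_t^{(j)}-\eta\mathcal V_t^{(j)})$; then $\tilde x^{(j+1)}=x_{m+1}^{(j)}$. All sampled sets are drawn independently of all past randomness. $\hat\partial F$ is the Fréchet subdifferential, $\hat\partial F(x)=\{v:\liminf_{\bar x\to x}\frac{F(\bar x)-F(x)-v^\top(\bar x-x)}{\|\bar x-x\|}\ge0\}$, $\mathrm{dist}(0,A)=\inf_{v\in A}\|v\|$. *)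

theory Defs
  imports "HOL-Analysis.Analysis" "HOL-Probability.Probability"
begin

definition frechet_subdiff :: "('a::euclidean_space \<Rightarrow> real) \<Rightarrow> 'a \<Rightarrow> 'a set" where
  "frechet_subdiff F x =
     {v. Liminf (at x) (\<lambda>y. ereal ((F y - F x - inner v (y - x)) / norm (y - x))) \<ge> 0}"

definition prox_set :: "('a::euclidean_space \<Rightarrow> real) \<Rightarrow> real \<Rightarrow> 'a \<Rightarrow> 'a set" where
  "prox_set r \<eta> y = {x. \<forall>z. (1 / (2 * \<eta>)) * (norm (x - y))\<^sup>2 + r x
                              \<le> (1 / (2 * \<eta>)) * (norm (z - y))\<^sup>2 + r z}"

text \<open>Samplings: random subsets of [n] = {0..<n}, given as pmfs on sets.\<close>
definition sampling_on :: "nat \<Rightarrow> nat set pmf \<Rightarrow> bool" where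
  "sampling_on n S \<longleftrightarrow> set_pmf S \<subseteq> Pow {..<n}"

definition marg :: "nat set pmf \<Rightarrow> nat \<Rightarrow> real" where
  "marg S i = measure_pmf.prob S {A. i \<in> A}"

definition pairprob :: "nat set pmf \<Rightarrow> nat \<Rightarrow> nat \<Rightarrow> real" where
  "pairprob S i j = measure_pmf.prob S {A. i \<in> A \<and> j \<in> A}"

definition proper_sampling :: "nat \<Rightarrow> nat set pmf \<Rightarrow> bool" where
  "proper_sampling n S \<longleftrightarrow> sampling_on n S \<and> (\<forall>i<n. marg S i > 0)"

text \<open>P - p p^T \<preceq> Diag(p_1 v_1, ..., p_n v_n), written out in the PSD order.\<close>
definition eso :: "nat \<Rightarrow> nat set pmf \<Rightarrow> (nat \<Rightarrow> real) \<Rightarrow> bool" where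
  "eso n S v \<longleftrightarrow> (\<forall>z::nat \<Rightarrow> real.
     (\<Sum>i<n. \<Sum>j<n. (pairprob S i j - marg S i * marg S j) * z i * z j)
       \<le> (\<Sum>i<n. marg S i * v i * (z i)\<^sup>2))"

text \<open>State after k inner steps: (x_k, x_{k+1}, V_k).  g i = gradient of f_i,
  p = inner marginals, prox = selection of prox_{eta r}, St t = inner sample at step t.\<close>
primrec spider_inner ::
  "(nat \<Rightarrow> 'a::euclidean_space \<Rightarrow> 'a) \<Rightarrow> nat \<Rightarrow> (nat \<Rightarrow> real) \<Rightarrow> ('a \<Rightarrow> 'a) \<Rightarrow> real
   \<Rightarrow> (nat \<Rightarrow> nat set) \<Rightarrow> 'a \<Rightarrow> 'a \<Rightarrow> nat \<Rightarrow> 'a \<times> 'a \<times> 'a" where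
  "spider_inner g n p prox \<eta> St x0 V0 0 = (x0, x0, V0)"
| "spider_inner g n p prox \<eta> St x0 V0 (Suc k) =
     (case spider_inner g n p prox \<eta> St x0 V0 k of (xa, xb, V) \<Rightarrow>
        let V' = (\<Sum>i\<in>St (Suc k). (1 / (real n * p i)) *\<^sub>R (g i xb - g i xa)) + V
        in (xb, prox (xb - \<eta> *\<^sub>R V'), V'))"

definition spider_V0 :: "(nat \<Rightarrow> 'a::euclidean_space \<Rightarrow> 'a) \<Rightarrow> nat \<Rightarrow> (nat \<Rightarrow> real) \<Rightarrow> nat set \<Rightarrow> 'a \<Rightarrow> 'a" where
  "spider_V0 g n p' S x = (\<Sum>i\<in>S. (1 / (real n * p' i)) *\<^sub>R g i x)"

text \<open>spider_outer ... k = x-tilde^{(k+1)}; outS j / inS j t are the samples of outer loop j.\<close>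
primrec spider_outer ::
  "(nat \<Rightarrow> 'a::euclidean_space \<Rightarrow> 'a) \<Rightarrow> nat \<Rightarrow> (nat \<Rightarrow> real) \<Rightarrow> (nat \<Rightarrow> real) \<Rightarrow> ('a \<Rightarrow> 'a)
   \<Rightarrow> real \<Rightarrow> nat \<Rightarrow> (nat \<Rightarrow> nat set) \<Rightarrow> (nat \<Rightarrow> nat \<Rightarrow> nat set) \<Rightarrow> 'a \<Rightarrow> nat \<Rightarrow> 'a" where
  "spider_outer g n p p' prox \<eta> m outS inS x1 0 = x1"
| "spider_outer g n p p' prox \<eta> m outS inS x1 (Suc k) =
     (let x0 = spider_outer g n p p' prox \<eta> m outS inS x1 k
      in fst (snd (spider_inner g n p prox \<eta> (inS (Suc k)) x0
                     (spider_V0 g n p' (outS (Suc k)) x0) m)))"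

text \<open>spider_x ... j t = x_{t+1}^{(j)} for j \<ge> 1.\<close>
definition spider_x ::
  "(nat \<Rightarrow> 'a::euclidean_space \<Rightarrow> 'a) \<Rightarrow> nat \<Rightarrow> (nat \<Rightarrow> real) \<Rightarrow> (nat \<Rightarrow> real) \<Rightarrow> ('a \<Rightarrow> 'a)
   \<Rightarrow> real \<Rightarrow> nat \<Rightarrow> (nat \<Rightarrow> nat set) \<Rightarrow> (nat \<Rightarrow> nat \<Rightarrow> nat set) \<Rightarrow> 'a \<Rightarrow> nat \<Rightarrow> nat \<Rightarrow> 'a" where
  "spider_x g n p p' prox \<eta> m outS inS x1 j t =
     (let x0 = spider_outer g n p p' prox \<eta> m outS inS x1 (j - 1)
      in fst (snd (spider_inner g n p prox \<eta> (inS j) x0 (spider_V0 g n p' (outS j) x0) t)))"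

definition spider_samples ::
  "nat set pmf \<Rightarrow> nat set pmf \<Rightarrow> nat \<Rightarrow> nat \<Rightarrow> ((nat \<Rightarrow> nat set) \<times> (nat \<times> nat \<Rightarrow> nat set)) pmf" where
  "spider_samples Sout Sin J m =
     pair_pmf (Pi_pmf {1..J} {} (\<lambda>_. Sout)) (Pi_pmf ({1..J} \<times> {1..m}) {} (\<lambda>_. Sin))"

end

theory Submission
  imports Defs
begin

text \<open>Each inner iteration is a proximal gradient step with a gradient estimate \<open>V\<close>. Combining the
  descent lemma, the interpolation inequality for smooth functions and the optimality of the prox
  point bounds \<open>dist(0, \<partial>F(x\<^sub>t\<^sub>+\<^sub>1))\<^sup>2\<close> by \<open>2\<parallel>\<nabla>f(x\<^sub>t) - V\<^sub>t\<parallel>\<^sup>2\<close> plus a multiple of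
  \<open>F(x\<^sub>t) - F(x\<^sub>t\<^sub>+\<^sub>1)\<close> minus \<open>2mQ\<parallel>x\<^sub>t\<^sub>+\<^sub>1 - x\<^sub>t\<parallel>\<^sup>2\<close>; the last coefficient is what the choice of \<open>\<eta>\<close>
  buys. The ESO condition bounds the variance of importance-weighted batch sums, so the error of the
  SPIDER estimator starts below \<open>Q'\<close> and grows by at most \<open>Q\<parallel>x\<^sub>t\<^sub>+\<^sub>1 - x\<^sub>t\<parallel>\<^sup>2\<close> per inner step.
  Over an epoch of \<open>m\<close> steps the accumulated growth is paid for by the negative terms, and the
  decreases of \<open>F\<close> telescope across all epochs down to \<open>F(x\<^sup>*)\<close>.\<close>

section \<open>Smooth functions\<close>

lemma gderiv_along_line:
  fixes \<phi> :: "'a::euclidean_space \<Rightarrow> real"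
  assumes "\<And>z. GDERIV \<phi> z :> g z"
  shows "((\<lambda>t. \<phi> (x + t *\<^sub>R d)) has_real_derivative inner (g (x + t *\<^sub>R d)) d) (at t)"
proof -
  have line: "((\<lambda>t. x + t *\<^sub>R d) has_derivative (\<lambda>s. s *\<^sub>R d)) (at t)"
    by (auto intro!: derivative_eq_intros)
  have "(\<phi> has_derivative (\<lambda>h. inner h (g (x + t *\<^sub>R d)))) (at (x + t *\<^sub>R d))"
    using assms by (simp add: gderiv_def)
  from has_derivative_compose[OF line this]
  show ?thesis
    by (simp add: o_def has_field_derivative_def inner_commute mult.commute[of _ "d \<bullet> _"])
qed

lemma lipschitz_gradient_directional_bound:
  assumes lip: "\<And>a b. norm (g a - g b) \<le> L * norm (a - b)" and "0 \<le> t"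
  shows "\<bar>inner (g (x + t *\<^sub>R d)) d - inner (g x) d\<bar> \<le> L * t * (norm d)\<^sup>2"
proof -
  have "\<bar>inner (g (x + t *\<^sub>R d)) d - inner (g x) d\<bar> = \<bar>inner (g (x + t *\<^sub>R d) - g x) d\<bar>"
    by (simp add: inner_diff_left)
  also have "\<dots> \<le> norm (g (x + t *\<^sub>R d) - g x) * norm d"
    by (rule Cauchy_Schwarz_ineq2)
  also have "\<dots> \<le> (L * norm (t *\<^sub>R d)) * norm d"
    using lip[of "x + t *\<^sub>R d" x] by (intro mult_right_mono) auto
  also have "\<dots> = L * t * (norm d)\<^sup>2"
    using \<open>0 \<le> t\<close> by (simp add: power2_eq_square)
  finally show ?thesis .
qed

lemma lipschitz_gradient_quadratic_bound:
  fixes \<phi> :: "'a::euclidean_space \<Rightarrow> real"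
  assumes gd: "\<And>z. GDERIV \<phi> z :> g z"
    and lip: "\<And>a b. norm (g a - g b) \<le> L * norm (a - b)"
  shows "\<bar>\<phi> y - \<phi> x - inner (g x) (y - x)\<bar> \<le> L / 2 * (norm (y - x))\<^sup>2"
proof -
  define d where "d = y - x"
  define slope where "slope t = inner (g (x + t *\<^sub>R d)) d - inner (g x) d" for t
  define h where "h c t = \<phi> (x + t *\<^sub>R d) - t * inner (g x) d + c * (L / 2 * t\<^sup>2 * (norm d)\<^sup>2)" for c t
  have dh: "(h c has_real_derivative slope t + c * (L * t * (norm d)\<^sup>2)) (at t)" for c t
    unfolding h_def slope_def
    by (rule derivative_eq_intros gderiv_along_line[OF gd] refl | simp)+
  have slope: "\<bar>slope t\<bar> \<le> L * t * (norm d)\<^sup>2" if "0 \<le> t" for t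
    unfolding slope_def using lipschitz_gradient_directional_bound[OF lip that] .
  have h_ends: "h c 1 = \<phi> y - inner (g x) (y - x) + c * (L / 2 * (norm (y - x))\<^sup>2)" "h c 0 = \<phi> x" for c
    by (simp_all add: h_def d_def)
  have "h (-1) 1 \<le> h (-1) 0"
  proof (rule DERIV_nonpos_imp_nonincreasing[of 0 1])
    fix t :: real assume "0 \<le> t" "t \<le> 1"
    then show "\<exists>y. DERIV (h (-1)) t :> y \<and> y \<le> 0"
      using dh[of "-1" t] slope[of t] by (intro exI[of _ "slope t - L * t * (norm d)\<^sup>2"]) auto
  qed simp
  moreover have "h 1 0 \<le> h 1 1"
  proof (rule DERIV_nonneg_imp_nondecreasing[of 0 1])
    fix t :: real assume "0 \<le> t" "t \<le> 1"
    then show "\<exists>y. DERIV (h 1) t :> y \<and> 0 \<le> y"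
      using dh[of 1 t] slope[of t] by (intro exI[of _ "slope t + L * t * (norm d)\<^sup>2"]) auto
  qed simp
  ultimately show ?thesis
    unfolding h_ends by (intro abs_leI) linarith+
qed

text \<open>Evaluate the upper quadratic bound around \<open>x\<close> and the lower one around \<open>y\<close> at the point
  \<open>z = (x + y)/2 + (g y - g x)/(2L)\<close>.\<close>
lemma lipschitz_gradient_interpolation:
  fixes \<phi> :: "'a::euclidean_space \<Rightarrow> real"
  assumes gd: "\<And>z. GDERIV \<phi> z :> g z"
    and lip: "\<And>a b. norm (g a - g b) \<le> L * norm (a - b)"
    and L: "L > 0"
  shows "\<phi> y - \<phi> x - inner (g x) (y - x)
         \<le> inner (g y - g x) (y - x) / 2 + L / 4 * (norm (y - x))\<^sup>2 - (norm (g y - g x))\<^sup>2 / (4 * L)"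
proof -
  define d where "d = y - x"
  define a where "a = g y - g x"
  define z where "z = x + (1/2) *\<^sub>R d + (1/(2*L)) *\<^sub>R a"
  have up: "\<phi> z - \<phi> x - inner (g x) (z - x) \<le> L/2 * (norm (z - x))\<^sup>2"
    using lipschitz_gradient_quadratic_bound[OF gd lip, of z x] by linarith
  have lo: "-(L/2 * (norm (z - y))\<^sup>2) \<le> \<phi> z - \<phi> y - inner (g y) (z - y)"
    using lipschitz_gradient_quadratic_bound[OF gd lip, of z y] by linarith
  have zx: "z - x = (1/2) *\<^sub>R d + (1/(2*L)) *\<^sub>R a"
    by (simp add: z_def)
  have zy: "z - y = (1/2) *\<^sub>R d + (1/(2*L)) *\<^sub>R a - d"
    by (simp add: z_def d_def)
  have "\<phi> y - \<phi> x - inner (g x) d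
        \<le> inner (g x) (z - x) - inner (g y) (z - y) - inner (g x) d + L/2 * ((norm (z - x))\<^sup>2 + (norm (z - y))\<^sup>2)"
    using up lo by (simp add: algebra_simps)
  also have "\<dots> = inner a d / 2 + L/4 * (norm d)\<^sup>2 - (norm a)\<^sup>2 / (4*L)"
    unfolding zx zy using L
    by (simp add: a_def power2_norm_eq_inner inner_add_left inner_add_right inner_diff_left
        inner_diff_right inner_commute field_simps)
  finally show ?thesis
    by (simp add: d_def a_def)
qed

section \<open>One proximal gradient step\<close>

lemma frechet_subdiff_quadratic_minorant:
  fixes F :: "'a::euclidean_space \<Rightarrow> real"
  assumes K: "K \<ge> 0" and minorant: "\<And>y. F y - F x - inner v (y - x) \<ge> - K * (norm (y - x))\<^sup>2"
  shows "v \<in> frechet_subdiff F x"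
  unfolding frechet_subdiff_def
proof (simp, subst le_Liminf_iff, intro allI impI)
  fix c :: ereal assume c: "c < 0"
  show "\<forall>\<^sub>F y in at x. c < ereal ((F y - F x - inner v (y - x)) / norm (y - x))"
  proof (cases c)
    case (real c')
    with c have c': "c' < 0" by simp
    define e where "e = - c' / (K + 1)"
    have e: "e > 0" unfolding e_def using c' K by (intro divide_pos_pos) auto
    have "\<forall>\<^sub>F y in at x. c' < (F y - F x - inner v (y - x)) / norm (y - x)"
      unfolding eventually_at
    proof (intro exI[of _ e] conjI e ballI impI allI)
      fix y assume y: "y \<noteq> x \<and> dist y x < e"
      then have np: "norm (y - x) > 0" and ne: "norm (y - x) < e"
        by (simp_all add: dist_norm)
      have "K * norm (y - x) \<le> K * e" using ne K by (intro mult_left_mono) auto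
      also have "K * e < - c'" using c' K by (simp add: e_def field_simps)
      finally have "c' < - K * norm (y - x)" by simp
      also have "- K * norm (y - x) = (- K * (norm (y - x))\<^sup>2) / norm (y - x)"
        using np by (simp add: power2_eq_square)
      also have "\<dots> \<le> (F y - F x - inner v (y - x)) / norm (y - x)"
        using minorant[of y] np by (intro divide_right_mono) auto
      finally show "c' < (F y - F x - inner v (y - x)) / norm (y - x)" .
    qed
    then show ?thesis by eventually_elim (simp add: real)
  qed (use c in simp_all)
qed

lemma prox_set_minimizes:
  assumes "xn \<in> prox_set r (1 / A) y"
  shows "A / 2 * (norm (xn - y))\<^sup>2 + r xn \<le> A / 2 * (norm (z - y))\<^sup>2 + r z"
  using assms unfolding prox_set_def by simp

lemma prox_set_frechet_subgradient:
  fixes fa :: "'a::euclidean_space \<Rightarrow> real"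
  assumes gd: "\<And>z. GDERIV fa z :> gf z"
    and lip: "\<And>a b. norm (gf a - gf b) \<le> L * norm (a - b)"
    and L: "L \<ge> 0" and A: "A > 0"
    and xn: "xn \<in> prox_set r (1 / A) y"
  shows "gf xn - A *\<^sub>R (xn - y) \<in> frechet_subdiff (\<lambda>z. fa z + r z) xn"
proof (rule frechet_subdiff_quadratic_minorant[where K = "L/2 + A/2"])
  show "0 \<le> L/2 + A/2" using L A by simp
  fix z
  have r: "r z - r xn \<ge> A/2 * ((norm (xn - y))\<^sup>2 - (norm (z - y))\<^sup>2)"
    using prox_set_minimizes[OF xn, of z] by (simp add: algebra_simps)
  have "z - y = (z - xn) + (xn - y)" by simp
  then have sq: "(norm (z - y))\<^sup>2 = (norm (z - xn))\<^sup>2 + 2 * inner (z - xn) (xn - y) + (norm (xn - y))\<^sup>2"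
    by (simp only: power2_norm_eq_inner inner_add_left inner_add_right inner_commute[of "xn - y" "z - xn"])
  have f: "fa z - fa xn - inner (gf xn) (z - xn) \<ge> - (L/2 * (norm (z - xn))\<^sup>2)"
    using lipschitz_gradient_quadratic_bound[OF gd lip, of z xn] by linarith
  have "inner (gf xn - A *\<^sub>R (xn - y)) (z - xn) = inner (gf xn) (z - xn) - A * inner (z - xn) (xn - y)"
    by (simp add: inner_diff_left inner_diff_right inner_commute algebra_simps)
  then show "fa z + r z - (fa xn + r xn) - inner (gf xn - A *\<^sub>R (xn - y)) (z - xn)
             \<ge> - (L/2 + A/2) * (norm (z - xn))\<^sup>2"
    using r sq f by (simp add: algebra_simps)
qed

lemma prox_set_decrease:
  assumes xn: "xn \<in> prox_set r (1 / A) (x - (1 / A) *\<^sub>R V)" and A: "A > 0"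
  shows "r xn - r x \<le> - (A / 2) * (norm (xn - x))\<^sup>2 - inner (xn - x) V"
proof -
  define d where "d = xn - x"
  define y where "y = x - (1 / A) *\<^sub>R V"
  have shift: "xn - y = d + (1 / A) *\<^sub>R V"
    by (simp add: d_def y_def)
  have xn_y: "(norm (xn - y))\<^sup>2 = (norm d)\<^sup>2 + 2 * (1 / A) * inner d V + (1 / A)\<^sup>2 * (norm V)\<^sup>2"
    unfolding shift power2_norm_eq_inner by (simp add: inner_add_left inner_add_right inner_commute power2_eq_square)
  have x_y: "(norm (x - y))\<^sup>2 = (1 / A)\<^sup>2 * (norm V)\<^sup>2"
    by (simp add: y_def power_divide power2_abs)
  have "A / 2 * ((norm (x - y))\<^sup>2 - (norm (xn - y))\<^sup>2) = - (A / 2) * (norm d)\<^sup>2 - inner d V"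
    unfolding xn_y x_y using A by (simp add: field_simps)
  then show ?thesis
    using prox_set_minimizes[OF xn[folded y_def], of x] by (simp add: d_def algebra_simps)
qed

lemma prox_step_sum_of_squares:
  fixes u a d :: "'a::real_inner"
  assumes L: "L > 0"
  shows "2 * (norm u)\<^sup>2 + (2*A + 4*L) * (- inner u d + A/2 * (norm d)\<^sup>2
           - (inner a d / 2 + L/4 * (norm d)\<^sup>2 - (norm a)\<^sup>2 / (4*L)))
         - L * (A - 4*L) * (norm d)\<^sup>2 - (norm (u + a - A *\<^sub>R d))\<^sup>2
       = (norm (u - a - (2*L) *\<^sub>R d))\<^sup>2 + (A - 4*L) / (2*L) * (norm (a + L *\<^sub>R d))\<^sup>2
         + (norm (a - L *\<^sub>R d))\<^sup>2"
proof -
  have expand: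
    "(norm (u + a - A *\<^sub>R d))\<^sup>2 = inner u u + inner a a + A*A*inner d d + 2*inner u a - 2*A*inner u d - 2*A*inner a d"
    "(norm (u - a - (2*L) *\<^sub>R d))\<^sup>2 = inner u u + inner a a + 4*L*L*inner d d - 2*inner u a - 4*L*inner u d + 4*L*inner a d"
    "(norm (a + L *\<^sub>R d))\<^sup>2 = inner a a + L*L*inner d d + 2*L*inner a d"
    "(norm (a - L *\<^sub>R d))\<^sup>2 = inner a a + L*L*inner d d - 2*L*inner a d"
    "(norm u)\<^sup>2 = inner u u" "(norm a)\<^sup>2 = inner a a" "(norm d)\<^sup>2 = inner d d"
    by (simp_all add: power2_norm_eq_inner inner_add_left inner_add_right inner_diff_left
        inner_diff_right inner_commute algebra_simps)
  show ?thesis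
    unfolding expand using L by (simp add: field_simps)
qed

text \<open>The subgradient is the one given by the optimality condition of the prox step, the decrease
  of the objective comes from the interpolation bound, and what remains is a sum of squares.\<close>
lemma prox_gradient_step_bound:
  fixes fa :: "'a::euclidean_space \<Rightarrow> real"
  assumes gd: "\<And>z. GDERIV fa z :> gf z"
    and lip: "\<And>a b. norm (gf a - gf b) \<le> L * norm (a - b)"
    and L: "L > 0" and A: "A \<ge> 4 * L"
    and xn: "xn \<in> prox_set r (1 / A) (x - (1 / A) *\<^sub>R V)"
  shows "(infdist 0 (frechet_subdiff (\<lambda>z. fa z + r z) xn))\<^sup>2
         \<le> 2 * (norm (gf x - V))\<^sup>2 + (2*A + 4*L) * ((fa x + r x) - (fa xn + r xn))
            - L * (A - 4*L) * (norm (xn - x))\<^sup>2"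
proof -
  have Apos: "A > 0" using L A by linarith
  define u where "u = gf x - V"
  define a where "a = gf xn - gf x"
  define d where "d = xn - x"
  have "gf xn - A *\<^sub>R (xn - (x - (1 / A) *\<^sub>R V)) = u + a - A *\<^sub>R d"
    using Apos by (simp add: u_def a_def d_def scaleR_diff_right algebra_simps)
  then have "u + a - A *\<^sub>R d \<in> frechet_subdiff (\<lambda>z. fa z + r z) xn"
    using prox_set_frechet_subgradient[OF gd lip _ Apos xn] L by simp
  then have "infdist 0 (frechet_subdiff (\<lambda>z. fa z + r z) xn) \<le> norm (u + a - A *\<^sub>R d)"
    using infdist_le[of _ _ 0] by fastforce
  then have dist: "(infdist 0 (frechet_subdiff (\<lambda>z. fa z + r z) xn))\<^sup>2 \<le> (norm (u + a - A *\<^sub>R d))\<^sup>2"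
    using infdist_nonneg by (intro power_mono) auto
  have "fa xn - fa x - inner (gf x) d \<le> inner a d / 2 + L/4 * (norm d)\<^sup>2 - (norm a)\<^sup>2 / (4*L)"
    using lipschitz_gradient_interpolation[OF gd lip L, of xn x] by (simp add: a_def d_def)
  then have decrease: "(fa xn + r xn) - (fa x + r x)
      \<le> inner u d - A/2 * (norm d)\<^sup>2 + (inner a d / 2 + L/4 * (norm d)\<^sup>2 - (norm a)\<^sup>2 / (4*L))"
    using prox_set_decrease[OF xn Apos] by (simp add: u_def d_def inner_diff_left inner_commute algebra_simps)
  have "0 \<le> (norm (u - a - (2*L) *\<^sub>R d))\<^sup>2 + (A - 4*L) / (2*L) * (norm (a + L *\<^sub>R d))\<^sup>2
         + (norm (a - L *\<^sub>R d))\<^sup>2"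
    using A L by (intro add_nonneg_nonneg mult_nonneg_nonneg) auto
  then have "(norm (u + a - A *\<^sub>R d))\<^sup>2 \<le> 2 * (norm u)\<^sup>2 + (2*A + 4*L) * (- inner u d + A/2 * (norm d)\<^sup>2
           - (inner a d / 2 + L/4 * (norm d)\<^sup>2 - (norm a)\<^sup>2 / (4*L))) - L * (A - 4*L) * (norm d)\<^sup>2"
    using prox_step_sum_of_squares[OF L, of u A d a] by linarith
  also have "\<dots> \<le> 2 * (norm u)\<^sup>2 + (2*A + 4*L) * ((fa x + r x) - (fa xn + r xn)) - L * (A - 4*L) * (norm d)\<^sup>2"
    using mult_left_mono[OF decrease, of "2*A + 4*L"] Apos L by (simp add: algebra_simps)
  finally show ?thesis
    using dist by (simp add: u_def d_def)
qed

section \<open>Expectations over finite distributions\<close>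

lemma expectation_finite_pmf:
  fixes h :: "'b \<Rightarrow> real"
  assumes "finite (set_pmf M)"
  shows "measure_pmf.expectation M h = (\<Sum>x\<in>set_pmf M. pmf M x * h x)"
  using assms by (subst integral_measure_pmf[of "set_pmf M"]) auto

lemma expectation_finite_pmf_mono:
  fixes h1 h2 :: "'b \<Rightarrow> real"
  assumes "finite (set_pmf M)" and "\<And>x. x \<in> set_pmf M \<Longrightarrow> h1 x \<le> h2 x"
  shows "measure_pmf.expectation M h1 \<le> measure_pmf.expectation M h2"
  using assms by (intro integral_mono_AE) (auto simp: integrable_measure_pmf_finite AE_measure_pmf_iff)

lemma expectation_pair_pmf_finite:
  fixes h :: "'a \<times> 'b \<Rightarrow> real"
  assumes fp: "finite (set_pmf p)" and fq: "finite (set_pmf q)"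
  shows "measure_pmf.expectation (pair_pmf p q) h
       = measure_pmf.expectation p (\<lambda>a. measure_pmf.expectation q (\<lambda>b. h (a, b)))"
proof -
  have fpq: "finite (set_pmf (pair_pmf p q))" using fp fq by (simp add: set_pair_pmf)
  have "measure_pmf.expectation (pair_pmf p q) h = (\<Sum>(a, b)\<in>set_pmf p \<times> set_pmf q. pmf p a * (pmf q b * h (a, b)))"
    by (subst expectation_finite_pmf[OF fpq]) (auto simp: set_pair_pmf pmf_pair intro: sum.cong)
  also have "\<dots> = (\<Sum>a\<in>set_pmf p. pmf p a * (\<Sum>b\<in>set_pmf q. pmf q b * h (a, b)))"
    by (simp add: sum.cartesian_product[symmetric] sum_distrib_left)
  finally show ?thesis
    by (simp add: expectation_finite_pmf[OF fp] expectation_finite_pmf[OF fq])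
qed

lemma expectation_finite_pmf_swap:
  fixes h :: "'a \<Rightarrow> 'b \<Rightarrow> real"
  assumes "finite (set_pmf p)" and "finite (set_pmf q)"
  shows "measure_pmf.expectation p (\<lambda>a. measure_pmf.expectation q (\<lambda>b. h a b))
       = measure_pmf.expectation q (\<lambda>b. measure_pmf.expectation p (\<lambda>a. h a b))"
  using assms by (simp add: expectation_finite_pmf sum_distrib_left sum.swap[of _ "set_pmf p"] mult.left_commute)

lemma finite_set_Pi_pmf:
  assumes "finite I" and "\<And>i. i \<in> I \<Longrightarrow> finite (set_pmf (D i))"
  shows "finite (set_pmf (Pi_pmf I d D))"
  using assms by (intro finite_subset[OF set_Pi_pmf_subset'] finite_PiE_dflt) auto

lemma expectation_Pi_pmf_split:
  fixes \<psi> :: "('i \<Rightarrow> 'x) \<Rightarrow> real"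
  assumes I: "finite I" and k: "k \<in> I" and fD: "\<And>i. i \<in> I \<Longrightarrow> finite (set_pmf (D i))"
  shows "measure_pmf.expectation (Pi_pmf I d D) \<psi>
       = measure_pmf.expectation (D k) (\<lambda>s. measure_pmf.expectation (Pi_pmf (I - {k}) d D) (\<lambda>om. \<psi> (om (k := s))))"
proof -
  have "Pi_pmf I d D = map_pmf (\<lambda>(s, om). om (k := s)) (pair_pmf (D k) (Pi_pmf (I - {k}) d D))"
    using I k by (subst Pi_pmf_insert[symmetric]) (auto simp: insert_absorb)
  moreover have "finite (set_pmf (Pi_pmf (I - {k}) d D))"
    using I fD by (intro finite_set_Pi_pmf) auto
  ultimately show ?thesis
    using fD[OF k] by (simp add: expectation_pair_pmf_finite case_prod_unfold)
qed

lemma expectation_Pi_pmf_coordinate: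
  fixes \<phi> :: "'h \<Rightarrow> 'x \<Rightarrow> real"
  assumes I: "finite I" and k: "k \<in> I" and fD: "\<And>i. i \<in> I \<Longrightarrow> finite (set_pmf (D i))"
    and h: "\<And>om s. h (om (k := s)) = h om"
  shows "measure_pmf.expectation (Pi_pmf I d D) (\<lambda>om. \<phi> (h om) (om k))
       = measure_pmf.expectation (Pi_pmf I d D) (\<lambda>om. measure_pmf.expectation (D k) (\<phi> (h om)))"
proof -
  have fk: "finite (set_pmf (D k))" using fD k by auto
  have fR: "finite (set_pmf (Pi_pmf (I - {k}) d D))" using I fD by (intro finite_set_Pi_pmf) auto
  have "measure_pmf.expectation (Pi_pmf I d D) (\<lambda>om. \<phi> (h om) (om k))
      = measure_pmf.expectation (D k) (\<lambda>s. measure_pmf.expectation (Pi_pmf (I - {k}) d D) (\<lambda>om. \<phi> (h om) s))"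
    by (simp add: expectation_Pi_pmf_split[OF I k fD] h)
  also have "\<dots> = measure_pmf.expectation (Pi_pmf (I - {k}) d D) (\<lambda>om. measure_pmf.expectation (D k) (\<phi> (h om)))"
    by (rule expectation_finite_pmf_swap[OF fk fR])
  also have "\<dots> = measure_pmf.expectation (Pi_pmf I d D) (\<lambda>om. measure_pmf.expectation (D k) (\<phi> (h om)))"
    by (simp add: expectation_Pi_pmf_split[OF I k fD] h)
  finally show ?thesis .
qed

lemma expectation_pair_Pi_pmf_fst_coordinate:
  fixes \<phi> :: "'h \<Rightarrow> 'x \<Rightarrow> real"
  assumes I: "finite I" and k: "k \<in> I" and fD: "\<And>i. i \<in> I \<Longrightarrow> finite (set_pmf (D i))"
    and fP: "finite (set_pmf P)"
    and h: "\<And>om om' s. h (om (k := s), om') = h (om, om')"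
  shows "measure_pmf.expectation (pair_pmf (Pi_pmf I d D) P) (\<lambda>om. \<phi> (h om) (fst om k))
       = measure_pmf.expectation (pair_pmf (Pi_pmf I d D) P) (\<lambda>om. measure_pmf.expectation (D k) (\<phi> (h om)))"
proof -
  have fPi: "finite (set_pmf (Pi_pmf I d D))" using I fD by (intro finite_set_Pi_pmf) auto
  have fk: "finite (set_pmf (D k))" using fD k by auto
  define \<psi> where "\<psi> H s = measure_pmf.expectation P (\<lambda>om'. \<phi> (H om') s)" for H s
  have "measure_pmf.expectation (pair_pmf (Pi_pmf I d D) P) (\<lambda>om. \<phi> (h om) (fst om k))
      = measure_pmf.expectation (Pi_pmf I d D) (\<lambda>om. \<psi> (\<lambda>om'. h (om, om')) (om k))"
    by (simp add: expectation_pair_pmf_finite[OF fPi fP] \<psi>_def)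
  also have "\<dots> = measure_pmf.expectation (Pi_pmf I d D) (\<lambda>om. measure_pmf.expectation (D k) (\<psi> (\<lambda>om'. h (om, om'))))"
    by (rule expectation_Pi_pmf_coordinate[OF I k fD, where h = "\<lambda>om om'. h (om, om')" and \<phi> = \<psi>])
      (simp_all add: h)
  also have "\<dots> = measure_pmf.expectation (pair_pmf (Pi_pmf I d D) P) (\<lambda>om. measure_pmf.expectation (D k) (\<phi> (h om)))"
    unfolding \<psi>_def
    by (subst expectation_finite_pmf_swap[OF fk fP]) (simp add: expectation_pair_pmf_finite[OF fPi fP])
  finally show ?thesis .
qed

lemma expectation_pair_Pi_pmf_snd_coordinate:
  fixes \<phi> :: "'h \<Rightarrow> 'x \<Rightarrow> real"
  assumes I: "finite I" and k: "k \<in> I" and fD: "\<And>i. i \<in> I \<Longrightarrow> finite (set_pmf (D i))"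
    and fP: "finite (set_pmf P)"
    and h: "\<And>om om' s. h (om, om' (k := s)) = h (om, om')"
  shows "measure_pmf.expectation (pair_pmf P (Pi_pmf I d D)) (\<lambda>om. \<phi> (h om) (snd om k))
       = measure_pmf.expectation (pair_pmf P (Pi_pmf I d D)) (\<lambda>om. measure_pmf.expectation (D k) (\<phi> (h om)))"
proof -
  have fPi: "finite (set_pmf (Pi_pmf I d D))" using I fD by (intro finite_set_Pi_pmf) auto
  have "measure_pmf.expectation (Pi_pmf I d D) (\<lambda>om'. \<phi> (h (om, om')) (om' k))
      = measure_pmf.expectation (Pi_pmf I d D) (\<lambda>om'. measure_pmf.expectation (D k) (\<phi> (h (om, om'))))" for om
    using h by (intro expectation_Pi_pmf_coordinate[OF I k fD]) 
  then show ?thesis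
    by (simp add: expectation_pair_pmf_finite[OF fP fPi])
qed

section \<open>Importance sampling under the ESO condition\<close>

lemma finite_set_pmf_sampling:
  assumes "sampling_on n S"
  shows "finite (set_pmf S)"
  using assms unfolding sampling_on_def by (rule finite_subset) auto

lemma marg_eq_expectation: "marg S i = measure_pmf.expectation S (\<lambda>A. of_bool (i \<in> A))"
proof -
  have "marg S i = measure_pmf.expectation S (indicator {A. i \<in> A})"
    by (simp add: marg_def)
  also have "indicator {A. i \<in> A} = (\<lambda>A. of_bool (i \<in> A) :: real)"
    by (auto simp: fun_eq_iff)
  finally show ?thesis .
qed

lemma pairprob_eq_expectation:
  "pairprob S i j = measure_pmf.expectation S (\<lambda>A. of_bool (i \<in> A) * of_bool (j \<in> A))"
proof -
  have "pairprob S i j = measure_pmf.expectation S (indicator {A. i \<in> A \<and> j \<in> A})"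
    by (simp add: pairprob_def)
  also have "indicator {A. i \<in> A \<and> j \<in> A} = (\<lambda>A. of_bool (i \<in> A) * of_bool (j \<in> A) :: real)"
    by (auto simp: fun_eq_iff)
  finally show ?thesis .
qed

lemma sum_subset_eq_sum_of_bool:
  fixes w :: "nat \<Rightarrow> 'a::real_vector"
  assumes "A \<subseteq> {..<n}"
  shows "(\<Sum>i\<in>A. w i) = (\<Sum>i<n. of_bool (i \<in> A) *\<^sub>R w i)"
  using assms by (intro sum.mono_neutral_cong_left) auto

lemma norm_diff_weighted_sum_squared:
  fixes c :: "'a::real_inner" and w :: "nat \<Rightarrow> 'a"
  shows "(norm (c - (\<Sum>i<n. t i *\<^sub>R w i)))\<^sup>2
     = (norm c)\<^sup>2 - 2 * (\<Sum>i<n. t i * inner c (w i)) + (\<Sum>i<n. \<Sum>j<n. t i * t j * inner (w i) (w j))"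
proof -
  have "inner (\<Sum>i<n. t i *\<^sub>R w i) (\<Sum>j<n. t j *\<^sub>R w j) = (\<Sum>i<n. inner (t i *\<^sub>R w i) (\<Sum>j<n. t j *\<^sub>R w j))"
    by (rule inner_sum_left)
  also have "\<dots> = (\<Sum>i<n. \<Sum>j<n. t i * t j * inner (w i) (w j))"
    by (simp add: inner_sum_right mult_ac)
  finally show ?thesis
    by (simp add: power2_norm_eq_inner inner_diff_left inner_diff_right inner_commute inner_sum_right)
qed

text \<open>The ESO condition is stated for real weights; applying it coordinatewise in an orthonormal
  basis gives it for vector weights.\<close>
lemma eso_euclidean:
  fixes w :: "nat \<Rightarrow> 'a::euclidean_space"
  assumes "eso n S v"
  shows "(\<Sum>i<n. \<Sum>j<n. (pairprob S i j - marg S i * marg S j) * inner (w i) (w j))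
         \<le> (\<Sum>i<n. marg S i * v i * (norm (w i))\<^sup>2)"
proof -
  define M where "M i j = pairprob S i j - marg S i * marg S j" for i j
  have eso: "(\<Sum>i<n. \<Sum>j<n. M i j * z i * z j) \<le> (\<Sum>i<n. marg S i * v i * (z i)\<^sup>2)" for z
    using assms unfolding eso_def M_def by blast
  have inner_basis: "inner (w i) (w j) = (\<Sum>b\<in>Basis. (w i \<bullet> b) * (w j \<bullet> b))" for i j
    by (rule euclidean_inner)
  have norm_basis: "(norm (w i))\<^sup>2 = (\<Sum>b\<in>Basis. (w i \<bullet> b)\<^sup>2)" for i
    unfolding power2_norm_eq_inner inner_basis by (simp add: power2_eq_square)
  have "(\<Sum>i<n. \<Sum>j<n. M i j * inner (w i) (w j)) = (\<Sum>i<n. \<Sum>j<n. \<Sum>b\<in>Basis. M i j * (w i \<bullet> b) * (w j \<bullet> b))"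
    by (simp only: inner_basis sum_distrib_left mult.assoc)
  also have "\<dots> = (\<Sum>i<n. \<Sum>b\<in>Basis. \<Sum>j<n. M i j * (w i \<bullet> b) * (w j \<bullet> b))"
    by (intro sum.cong refl) (rule sum.swap)
  also have "\<dots> = (\<Sum>b\<in>Basis. \<Sum>i<n. \<Sum>j<n. M i j * (w i \<bullet> b) * (w j \<bullet> b))"
    by (rule sum.swap)
  also have "\<dots> \<le> (\<Sum>b\<in>Basis. \<Sum>i<n. marg S i * v i * (w i \<bullet> b)\<^sup>2)"
    by (rule sum_mono) (rule eso)
  also have "\<dots> = (\<Sum>i<n. \<Sum>b\<in>Basis. marg S i * v i * (w i \<bullet> b)\<^sup>2)"
    by (rule sum.swap)
  also have "\<dots> = (\<Sum>i<n. marg S i * v i * (norm (w i))\<^sup>2)"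
    by (simp only: norm_basis sum_distrib_left)
  finally show ?thesis
    unfolding M_def .
qed

lemma eso_sampling_variance:
  fixes w :: "nat \<Rightarrow> 'a::euclidean_space"
  assumes ps: "proper_sampling n S" and es: "eso n S v"
  shows "measure_pmf.expectation S (\<lambda>A. (norm (u + (\<Sum>i<n. marg S i *\<^sub>R w i) - (\<Sum>i\<in>A. w i)))\<^sup>2)
         \<le> (norm u)\<^sup>2 + (\<Sum>i<n. marg S i * v i * (norm (w i))\<^sup>2)"
proof -
  have so: "sampling_on n S" using ps by (simp add: proper_sampling_def)
  have fin: "finite (set_pmf S)" by (rule finite_set_pmf_sampling[OF so])
  define \<mu> where "\<mu> = (\<Sum>i<n. marg S i *\<^sub>R w i)"
  define c where "c = u + \<mu>"
  define ind where "ind i A = (of_bool (i \<in> A) :: real)" for i :: nat and A :: "nat set"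
  have marg_ind: "measure_pmf.expectation S (ind i) = marg S i" for i
    by (simp add: ind_def[abs_def] marg_eq_expectation)
  have pair_ind: "measure_pmf.expectation S (\<lambda>A. ind i A * ind j A) = pairprob S i j" for i j
    by (simp add: ind_def pairprob_eq_expectation)
  have pointwise: "(norm (c - (\<Sum>i\<in>A. w i)))\<^sup>2
      = (norm c)\<^sup>2 - 2 * (\<Sum>i<n. ind i A * inner c (w i)) + (\<Sum>i<n. \<Sum>j<n. ind i A * ind j A * inner (w i) (w j))"
    if "A \<in> set_pmf S" for A
  proof -
    have "A \<subseteq> {..<n}" using so that by (auto simp: sampling_on_def)
    then have "(\<Sum>i\<in>A. w i) = (\<Sum>i<n. ind i A *\<^sub>R w i)"
      unfolding ind_def by (rule sum_subset_eq_sum_of_bool)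
    then show ?thesis
      by (simp only: norm_diff_weighted_sum_squared)
  qed
  have "measure_pmf.expectation S (\<lambda>A. (norm (c - (\<Sum>i\<in>A. w i)))\<^sup>2)
      = measure_pmf.expectation S (\<lambda>A. (norm c)\<^sup>2 - 2 * (\<Sum>i<n. ind i A * inner c (w i))
          + (\<Sum>i<n. \<Sum>j<n. ind i A * ind j A * inner (w i) (w j)))"
    by (intro integral_cong_AE) (auto simp: AE_measure_pmf_iff pointwise)
  also have "\<dots> = (norm c)\<^sup>2 - 2 * (\<Sum>i<n. marg S i * inner c (w i))
        + (\<Sum>i<n. \<Sum>j<n. pairprob S i j * inner (w i) (w j))"
    by (simp add: integrable_measure_pmf_finite[OF fin] marg_ind pair_ind)
  also have "(\<Sum>i<n. marg S i * inner c (w i)) = inner c \<mu>"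
    by (simp add: \<mu>_def inner_sum_right)
  also have "(norm c)\<^sup>2 - 2 * inner c \<mu> = (norm u)\<^sup>2 - (norm \<mu>)\<^sup>2"
    by (simp add: c_def power2_norm_eq_inner inner_add_left inner_add_right inner_commute)
  also have "(norm \<mu>)\<^sup>2 = (\<Sum>i<n. \<Sum>j<n. marg S i * marg S j * inner (w i) (w j))"
    using norm_diff_weighted_sum_squared[of 0 "marg S" w n] by (simp add: \<mu>_def)
  finally have "measure_pmf.expectation S (\<lambda>A. (norm (c - (\<Sum>i\<in>A. w i)))\<^sup>2)
      = (norm u)\<^sup>2 + (\<Sum>i<n. \<Sum>j<n. (pairprob S i j - marg S i * marg S j) * inner (w i) (w j))"
    by (simp add: sum_subtractf left_diff_distrib)
  then show ?thesis
    using eso_euclidean[OF es, of w] by (simp add: c_def \<mu>_def)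
qed

lemma importance_sampling_variance:
  fixes y :: "nat \<Rightarrow> 'a::euclidean_space"
  assumes ps: "proper_sampling n S" and es: "eso n S v"
  shows "measure_pmf.expectation S
           (\<lambda>A. (norm (u + (\<Sum>i<n. (1 / real n) *\<^sub>R y i) - (\<Sum>i\<in>A. (1 / (real n * marg S i)) *\<^sub>R y i)))\<^sup>2)
         \<le> (norm u)\<^sup>2 + (\<Sum>i<n. v i * (norm (y i))\<^sup>2 / (marg S i * (real n)\<^sup>2))"
proof -
  define w where "w i = (1 / (real n * marg S i)) *\<^sub>R y i" for i
  have p: "marg S i > 0" if "i < n" for i
    using ps that by (simp add: proper_sampling_def)
  have "(\<Sum>i<n. (1 / real n) *\<^sub>R y i) = (\<Sum>i<n. marg S i *\<^sub>R w i)"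
  proof (intro sum.cong refl)
    fix i assume "i \<in> {..<n}"
    with p[of i] show "(1 / real n) *\<^sub>R y i = marg S i *\<^sub>R w i"
      by (simp add: w_def)
  qed
  moreover have "(\<Sum>i<n. marg S i * v i * (norm (w i))\<^sup>2) = (\<Sum>i<n. v i * (norm (y i))\<^sup>2 / (marg S i * (real n)\<^sup>2))"
  proof (intro sum.cong refl)
    fix i assume "i \<in> {..<n}"
    with p[of i] show "marg S i * v i * (norm (w i))\<^sup>2 = v i * (norm (y i))\<^sup>2 / (marg S i * (real n)\<^sup>2)"
      by (simp add: w_def power2_eq_square field_simps)
  qed
  ultimately show ?thesis
    using eso_sampling_variance[OF ps es, of u w] by (simp add: w_def)
qed

lemma eso_nonneg:
  assumes ps: "proper_sampling n S" and es: "eso n S v" and i: "i < n"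
  shows "v i \<ge> 0"
proof -
  have single: "(\<Sum>l<n. f l * of_bool (l = i)) = f i" for f :: "nat \<Rightarrow> real"
    using i by simp
  have "(\<Sum>k<n. \<Sum>l<n. (pairprob S k l - marg S k * marg S l) * of_bool (k = i) * of_bool (l = i))
        \<le> (\<Sum>k<n. marg S k * v k * (of_bool (k = i))\<^sup>2)"
    using es unfolding eso_def by (rule spec)
  then have "pairprob S i i - marg S i * marg S i \<le> marg S i * v i"
    by (simp only: single power2_eq_square mult.assoc[symmetric]) simp
  moreover have "pairprob S i i = marg S i" by (simp add: pairprob_def marg_def)
  ultimately have "marg S i * (1 - marg S i) \<le> marg S i * v i"
    by (simp add: algebra_simps)
  moreover have "marg S i > 0" using ps i by (simp add: proper_sampling_def)
  ultimately have "1 - marg S i \<le> v i"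
    by (simp add: mult_le_cancel_left_pos)
  moreover have "marg S i \<le> 1" by (simp add: marg_def)
  ultimately show ?thesis by linarith
qed

section \<open>The ProxSPIDER-AS iterates\<close>

lemma spider_inner_Suc:
  shows "fst (spider_inner g n p prox \<eta> St x0 V0 (Suc k)) = fst (snd (spider_inner g n p prox \<eta> St x0 V0 k))"
    and "snd (snd (spider_inner g n p prox \<eta> St x0 V0 (Suc k)))
         = (\<Sum>i\<in>St (Suc k). (1 / (real n * p i)) *\<^sub>R (g i (fst (snd (spider_inner g n p prox \<eta> St x0 V0 k)))
              - g i (fst (spider_inner g n p prox \<eta> St x0 V0 k)))) + snd (snd (spider_inner g n p prox \<eta> St x0 V0 k))"
    and "fst (snd (spider_inner g n p prox \<eta> St x0 V0 (Suc k)))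
         = prox (fst (snd (spider_inner g n p prox \<eta> St x0 V0 k)) - \<eta> *\<^sub>R snd (snd (spider_inner g n p prox \<eta> St x0 V0 (Suc k))))"
  by (cases "spider_inner g n p prox \<eta> St x0 V0 k"; simp add: Let_def)+

lemma spider_inner_cong:
  assumes "\<And>i. 1 \<le> i \<Longrightarrow> i \<le> k \<Longrightarrow> St i = St' i"
  shows "spider_inner g n p prox \<eta> St x0 V0 k = spider_inner g n p prox \<eta> St' x0 V0 k"
  using assms by (induction k) auto

lemma spider_outer_cong:
  assumes "\<And>i. 1 \<le> i \<Longrightarrow> i \<le> k \<Longrightarrow> outS i = outS' i \<and> inS i = inS' i"
  shows "spider_outer g n p p' prox \<eta> m outS inS x1 k = spider_outer g n p p' prox \<eta> m outS' inS' x1 k"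
  using assms by (induction k) (auto simp: Let_def)

lemma sum_diff_Suc_atLeastAtMost:
  fixes a :: "nat \<Rightarrow> 'a::ab_group_add"
  shows "(\<Sum>t=1..m. a t - a (Suc t)) = a 1 - a (Suc m)"
  using sum_Suc_diff[of 1 m a] by (simp add: sum_subtractf) (metis minus_diff_eq)

text \<open>The bookkeeping of one epoch: \<open>U t\<close> is the error of the gradient estimator, which starts below
  \<open>Q'\<close> and grows by \<open>Q * D t\<close> per step, where \<open>D t\<close> is the squared step length; the terms
  \<open>- 2 m Q D t\<close> in the per-step bounds pay for all of this growth.\<close>
lemma epoch_sum_bound:
  fixes U D a dist :: "nat \<Rightarrow> real"
  assumes U0: "U 0 \<le> Q'" and U_step: "\<And>t. t < m \<Longrightarrow> U (Suc t) \<le> U t + Q * D t"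
    and D0: "D 0 = 0" and D_nonneg: "\<And>t. D t \<ge> 0" and Q: "Q \<ge> 0"
    and dist: "\<And>t. 1 \<le> t \<Longrightarrow> t \<le> m \<Longrightarrow> dist t \<le> 2 * U t + c * (a t - a (Suc t)) - 2 * real m * Q * D t"
  shows "(\<Sum>t=1..m. dist t) \<le> 2 * real m * Q' + c * (a 1 - a (Suc m))"
proof -
  define SD where "SD = (\<Sum>s=1..m. D s)"
  have U_partial: "U t \<le> Q' + Q * (\<Sum>s<t. D s)" if "t \<le> m" for t
    using that
  proof (induction t)
    case (Suc t)
    then have "U (Suc t) \<le> Q' + Q * (\<Sum>s<t. D s) + Q * D t"
      using U_step[of t] by simp
    then show ?case by (simp add: algebra_simps)
  qed (use U0 in simp)
  have partial_le: "(\<Sum>s<t. D s) \<le> SD" if "t \<le> m" for t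
  proof -
    have "(\<Sum>s<t. D s) \<le> (\<Sum>s<Suc m. D s)"
      using that D_nonneg by (intro sum_mono2) auto
    also have "(\<Sum>s<Suc m. D s) = D 0 + SD"
      by (subst sum.lessThan_Suc_shift) (simp add: SD_def sum.atLeast1_atMost_eq)
    finally show ?thesis using D0 by simp
  qed
  have "(\<Sum>t=1..m. dist t) \<le> (\<Sum>t=1..m. 2 * (Q' + Q * SD) + c * (a t - a (Suc t)) - 2 * real m * Q * D t)"
  proof (rule sum_mono)
    fix t assume "t \<in> {1..m}"
    then have "U t \<le> Q' + Q * SD" and "dist t \<le> 2 * U t + c * (a t - a (Suc t)) - 2 * real m * Q * D t"
      using U_partial[of t] partial_le[of t] mult_left_mono[OF partial_le[of t] Q] dist[of t] by auto
    then show "dist t \<le> 2 * (Q' + Q * SD) + c * (a t - a (Suc t)) - 2 * real m * Q * D t"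
      by (simp add: algebra_simps)
  qed
  also have "\<dots> = (\<Sum>t=1..m. 2 * (Q' + Q * SD)) + c * (\<Sum>t=1..m. a t - a (Suc t)) - 2 * real m * Q * SD"
    by (simp only: sum.distrib sum_subtractf sum_distrib_left[symmetric] SD_def[symmetric])
  also have "\<dots> = 2 * real m * Q' + c * (a 1 - a (Suc m))"
    unfolding sum_diff_Suc_atLeastAtMost by (simp add: algebra_simps)
  finally show ?thesis .
qed

section \<open>The stochastic analysis\<close>

type_synonym sample_path = "(nat \<Rightarrow> nat set) \<times> (nat \<times> nat \<Rightarrow> nat set)"

locale prox_spider =
  fixes n m J :: nat
    and f :: "nat \<Rightarrow> 'a::euclidean_space \<Rightarrow> real"
    and g :: "nat \<Rightarrow> 'a \<Rightarrow> 'a"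
    and r :: "'a \<Rightarrow> real"
    and G L :: "nat \<Rightarrow> real"
    and Sout Sin :: "nat set pmf"
    and v v' :: "nat \<Rightarrow> real"
    and prox :: "'a \<Rightarrow> 'a"
    and x1 :: 'a
    and Lt Q Q' \<eta> :: real
  assumes Lt_def: "Lt = (1 / real n) * (\<Sum>i<n. L i)"
    and Q_def: "Q = (\<Sum>i<n. v i * (L i)\<^sup>2 / (marg Sin i * (real n)\<^sup>2))"
    and Q'_def: "Q' = (\<Sum>i<n. v' i * (G i)\<^sup>2 / (marg Sout i * (real n)\<^sup>2))"
    and \<eta>_def: "\<eta> = 1 / (4 * Lt + 2 * real m * Q / Lt)"
    and grad: "\<And>i x. i < n \<Longrightarrow> GDERIV (f i) x :> g i x"
    and bounded: "\<And>i x. i < n \<Longrightarrow> norm (g i x) \<le> G i"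
    and lipschitz: "\<And>i x y. i < n \<Longrightarrow> norm (g i x - g i y) \<le> L i * norm (x - y)"
    and prox_sel: "\<And>y. prox y \<in> prox_set r \<eta> y"
    and Lt_pos: "Lt > 0"
    and out_proper: "proper_sampling n Sout"
    and out_eso: "eso n Sout v'"
    and in_proper: "proper_sampling n Sin"
    and in_eso: "eso n Sin v"
begin

definition f_avg :: "'a \<Rightarrow> real" where
  "f_avg x = (1 / real n) * (\<Sum>i<n. f i x)"

definition grad_avg :: "'a \<Rightarrow> 'a" where
  "grad_avg x = (\<Sum>i<n. (1 / real n) *\<^sub>R g i x)"

definition objective :: "'a \<Rightarrow> real" where
  "objective x = f_avg x + r x"

abbreviation expect :: "(sample_path \<Rightarrow> real) \<Rightarrow> real" where
  "expect h \<equiv> measure_pmf.expectation (spider_samples Sout Sin J m) h"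

lemma marg_Sin_pos: "i < n \<Longrightarrow> marg Sin i > 0"
  using in_proper by (simp add: proper_sampling_def)

lemma marg_Sout_pos: "i < n \<Longrightarrow> marg Sout i > 0"
  using out_proper by (simp add: proper_sampling_def)

lemma Q_nonneg: "Q \<ge> 0"
  unfolding Q_def using eso_nonneg[OF in_proper in_eso] marg_Sin_pos
  by (intro sum_nonneg divide_nonneg_pos mult_nonneg_nonneg) auto

lemma Q'_nonneg: "Q' \<ge> 0"
  unfolding Q'_def using eso_nonneg[OF out_proper out_eso] marg_Sout_pos
  by (intro sum_nonneg divide_nonneg_pos mult_nonneg_nonneg) auto

lemma inverse_\<eta>: "1 / \<eta> = 4 * Lt + 2 * real m * Q / Lt"
  by (simp add: \<eta>_def)

lemma inverse_\<eta>_ge: "4 * Lt \<le> 1 / \<eta>"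
  unfolding inverse_\<eta> using Lt_pos Q_nonneg by simp

lemma Lt_times_excess: "Lt * (1 / \<eta> - 4 * Lt) = 2 * real m * Q"
  unfolding inverse_\<eta> using Lt_pos by (simp add: field_simps)

lemma f_avg_gradient: "GDERIV f_avg z :> grad_avg z"
proof -
  have "((\<lambda>x. \<Sum>i<n. f i x) has_derivative (\<lambda>h. \<Sum>i<n. inner h (g i z))) (at z)"
    by (rule has_derivative_sum) (use grad in \<open>auto simp: gderiv_def\<close>)
  then have "(f_avg has_derivative (\<lambda>h. (1 / real n) * (\<Sum>i<n. inner h (g i z)))) (at z)"
    unfolding f_avg_def[abs_def] by (rule has_derivative_mult_right)
  then show ?thesis
    by (simp add: gderiv_def grad_avg_def inner_sum_right sum_distrib_left)
qed

lemma grad_avg_lipschitz: "norm (grad_avg x - grad_avg y) \<le> Lt * norm (x - y)"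
proof -
  have "grad_avg x - grad_avg y = (1 / real n) *\<^sub>R (\<Sum>i<n. g i x - g i y)"
    by (simp add: grad_avg_def scaleR_sum_right sum_subtractf algebra_simps)
  then have "norm (grad_avg x - grad_avg y) = (1 / real n) * norm (\<Sum>i<n. g i x - g i y)"
    by simp
  also have "\<dots> \<le> (1 / real n) * (\<Sum>i<n. L i * norm (x - y))"
    by (intro mult_left_mono order.trans[OF norm_sum] sum_mono lipschitz) auto
  also have "\<dots> = Lt * norm (x - y)"
    by (simp add: Lt_def sum_distrib_right)
  finally show ?thesis .
qed

lemma finite_samples: "finite (set_pmf (spider_samples Sout Sin J m))"
proof -
  have "finite (set_pmf Sout)" "finite (set_pmf Sin)"
    using out_proper in_proper finite_set_pmf_sampling by (auto simp: proper_sampling_def)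
  then show ?thesis
    by (simp add: spider_samples_def set_pair_pmf finite_set_Pi_pmf)
qed

lemma integrable_samples [simp]: "integrable (spider_samples Sout Sin J m) (h :: sample_path \<Rightarrow> real)"
  by (rule integrable_measure_pmf_finite[OF finite_samples])

lemma V0_variance:
  "measure_pmf.expectation Sout (\<lambda>S. (norm (grad_avg x - spider_V0 g n (marg Sout) S x))\<^sup>2) \<le> Q'"
proof -
  have "measure_pmf.expectation Sout (\<lambda>S. (norm (grad_avg x - spider_V0 g n (marg Sout) S x))\<^sup>2)
      = measure_pmf.expectation Sout (\<lambda>S. (norm (0 + (\<Sum>i<n. (1 / real n) *\<^sub>R g i x)
          - (\<Sum>i\<in>S. (1 / (real n * marg Sout i)) *\<^sub>R g i x)))\<^sup>2)"
    by (simp add: grad_avg_def spider_V0_def)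
  also have "\<dots> \<le> (norm (0::'a))\<^sup>2 + (\<Sum>i<n. v' i * (norm (g i x))\<^sup>2 / (marg Sout i * (real n)\<^sup>2))"
    by (rule importance_sampling_variance[OF out_proper out_eso])
  also have "\<dots> \<le> Q'"
    unfolding Q'_def
  proof (simp, rule sum_mono)
    fix i assume "i \<in> {..<n}"
    then have i: "i < n" by simp
    have "(norm (g i x))\<^sup>2 \<le> (G i)\<^sup>2"
      using bounded[OF i, of x] by (intro power_mono) auto
    then show "v' i * (norm (g i x))\<^sup>2 / (marg Sout i * (real n)\<^sup>2) \<le> v' i * (G i)\<^sup>2 / (marg Sout i * (real n)\<^sup>2)"
      using eso_nonneg[OF out_proper out_eso i] marg_Sout_pos[OF i]
      by (intro divide_right_mono mult_left_mono) auto
  qed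
  finally show ?thesis .
qed

lemma spider_update_variance:
  "measure_pmf.expectation Sin
     (\<lambda>S. (norm (grad_avg y - ((\<Sum>i\<in>S. (1 / (real n * marg Sin i)) *\<^sub>R (g i y - g i x)) + V)))\<^sup>2)
   \<le> (norm (grad_avg x - V))\<^sup>2 + Q * (norm (y - x))\<^sup>2"
proof -
  have split: "grad_avg y - ((\<Sum>i\<in>S. (1 / (real n * marg Sin i)) *\<^sub>R (g i y - g i x)) + V)
      = (grad_avg x - V) + (\<Sum>i<n. (1 / real n) *\<^sub>R (g i y - g i x))
          - (\<Sum>i\<in>S. (1 / (real n * marg Sin i)) *\<^sub>R (g i y - g i x))" for S
    by (simp add: grad_avg_def scaleR_diff_right sum_subtractf algebra_simps)
  have "measure_pmf.expectation Sin
      (\<lambda>S. (norm (grad_avg y - ((\<Sum>i\<in>S. (1 / (real n * marg Sin i)) *\<^sub>R (g i y - g i x)) + V)))\<^sup>2)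
    \<le> (norm (grad_avg x - V))\<^sup>2 + (\<Sum>i<n. v i * (norm (g i y - g i x))\<^sup>2 / (marg Sin i * (real n)\<^sup>2))"
    unfolding split by (rule importance_sampling_variance[OF in_proper in_eso])
  also have "(\<Sum>i<n. v i * (norm (g i y - g i x))\<^sup>2 / (marg Sin i * (real n)\<^sup>2))
      \<le> (\<Sum>i<n. v i * (L i)\<^sup>2 / (marg Sin i * (real n)\<^sup>2) * (norm (y - x))\<^sup>2)"
  proof (rule sum_mono)
    fix i assume "i \<in> {..<n}"
    then have i: "i < n" by simp
    have "(norm (g i y - g i x))\<^sup>2 \<le> (L i * norm (y - x))\<^sup>2"
      using lipschitz[OF i, of y x] by (intro power_mono) auto
    then have "v i * (norm (g i y - g i x))\<^sup>2 / (marg Sin i * (real n)\<^sup>2)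
        \<le> v i * (L i * norm (y - x))\<^sup>2 / (marg Sin i * (real n)\<^sup>2)"
      using eso_nonneg[OF in_proper in_eso i] marg_Sin_pos[OF i]
      by (intro divide_right_mono mult_left_mono) auto
    then show "v i * (norm (g i y - g i x))\<^sup>2 / (marg Sin i * (real n)\<^sup>2)
        \<le> v i * (L i)\<^sup>2 / (marg Sin i * (real n)\<^sup>2) * (norm (y - x))\<^sup>2"
      by (simp add: power_mult_distrib)
  qed
  also have "\<dots> = Q * (norm (y - x))\<^sup>2"
    by (simp add: Q_def sum_distrib_right)
  finally show ?thesis by simp
qed

definition epoch_start :: "sample_path \<Rightarrow> nat \<Rightarrow> 'a" where
  "epoch_start om j = spider_outer g n (marg Sin) (marg Sout) prox \<eta> m (fst om) (curry (snd om)) x1 (j - 1)"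

definition inner_state :: "sample_path \<Rightarrow> nat \<Rightarrow> nat \<Rightarrow> 'a \<times> 'a \<times> 'a" where
  "inner_state om j t = spider_inner g n (marg Sin) prox \<eta> (curry (snd om) j) (epoch_start om j)
     (spider_V0 g n (marg Sout) (fst om j) (epoch_start om j)) t"

text \<open>\<open>x_cur om j t\<close>, \<open>x_next om j t\<close> and \<open>V_cur om j t\<close> are the paper's
  \<open>x\<^sub>t\<close>, \<open>x\<^sub>t\<^sub>+\<^sub>1\<close> and \<open>V\<^sub>t\<close> in epoch \<open>j\<close> along the sample path \<open>om\<close>.\<close>

definition x_cur :: "sample_path \<Rightarrow> nat \<Rightarrow> nat \<Rightarrow> 'a" where
  "x_cur om j t = fst (inner_state om j t)"

definition x_next :: "sample_path \<Rightarrow> nat \<Rightarrow> nat \<Rightarrow> 'a" where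
  "x_next om j t = fst (snd (inner_state om j t))"

definition V_cur :: "sample_path \<Rightarrow> nat \<Rightarrow> nat \<Rightarrow> 'a" where
  "V_cur om j t = snd (snd (inner_state om j t))"

lemma inner_state_0 [simp]:
  "x_cur om j 0 = epoch_start om j"
  "x_next om j 0 = epoch_start om j"
  "V_cur om j 0 = spider_V0 g n (marg Sout) (fst om j) (epoch_start om j)"
  by (simp_all add: x_cur_def x_next_def V_cur_def inner_state_def)

lemma inner_state_Suc:
  "x_cur om j (Suc t) = x_next om j t"
  "V_cur om j (Suc t) = (\<Sum>i\<in>snd om (j, Suc t). (1 / (real n * marg Sin i)) *\<^sub>R
      (g i (x_next om j t) - g i (x_cur om j t))) + V_cur om j t"
  "x_next om j (Suc t) = prox (x_cur om j (Suc t) - \<eta> *\<^sub>R V_cur om j (Suc t))"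
  unfolding x_cur_def x_next_def V_cur_def inner_state_def
  by (simp_all only: spider_inner_Suc) simp

lemma epoch_start_1: "epoch_start om 1 = x1"
  by (simp add: epoch_start_def)

lemma epoch_start_Suc: "1 \<le> j \<Longrightarrow> epoch_start om (Suc j) = x_next om j m"
  by (cases j) (simp_all add: epoch_start_def x_next_def inner_state_def Let_def)

lemma spider_x_eq_x_next:
  "spider_x g n (marg Sin) (marg Sout) prox \<eta> m outS (curry inS) x1 j t = x_next (outS, inS) j t"
  by (simp add: spider_x_def x_next_def inner_state_def epoch_start_def Let_def)

text \<open>That a batch is independent of the state it is applied to is expressed by invariance of the
  state under changing that batch.\<close>
lemma epoch_start_outer_update: "1 \<le> j \<Longrightarrow> epoch_start (outS(j := S), inS) j = epoch_start (outS, inS) j"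
  unfolding epoch_start_def by (simp, rule spider_outer_cong) auto

lemma inner_state_inner_update:
  assumes "1 \<le> j"
  shows "inner_state (outS, inS((j, Suc t) := S)) j t = inner_state (outS, inS) j t"
proof -
  have start: "epoch_start (outS, inS((j, Suc t) := S)) j = epoch_start (outS, inS) j"
    unfolding epoch_start_def by (simp, rule spider_outer_cong) (use assms in \<open>auto simp: fun_eq_iff\<close>)
  show ?thesis
    unfolding inner_state_def start by (simp, rule spider_inner_cong) auto
qed

lemma expect_outer_batch:
  assumes "j \<in> {1..J}" and "\<And>outS inS S. h (outS(j := S), inS) = h (outS, inS)"
  shows "expect (\<lambda>om. \<phi> (h om) (fst om j)) = expect (\<lambda>om. measure_pmf.expectation Sout (\<phi> (h om)))"
  unfolding spider_samples_def
  using assms in_proper out_proper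
  by (intro expectation_pair_Pi_pmf_fst_coordinate)
    (auto simp: proper_sampling_def finite_set_pmf_sampling finite_set_Pi_pmf)

lemma expect_inner_batch:
  assumes "j \<in> {1..J}" "t \<in> {1..m}" and "\<And>outS inS S. h (outS, inS((j, t) := S)) = h (outS, inS)"
  shows "expect (\<lambda>om. \<phi> (h om) (snd om (j, t))) = expect (\<lambda>om. measure_pmf.expectation Sin (\<phi> (h om)))"
  unfolding spider_samples_def
  using assms in_proper out_proper
  by (intro expectation_pair_Pi_pmf_snd_coordinate)
    (auto simp: proper_sampling_def finite_set_pmf_sampling finite_set_Pi_pmf)

lemma initial_error_bound:
  assumes "j \<in> {1..J}"
  shows "expect (\<lambda>om. (norm (grad_avg (x_cur om j 0) - V_cur om j 0))\<^sup>2) \<le> Q'"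
proof -
  have "expect (\<lambda>om. (norm (grad_avg (x_cur om j 0) - V_cur om j 0))\<^sup>2)
      = expect (\<lambda>om. measure_pmf.expectation Sout
          (\<lambda>S. (norm (grad_avg (epoch_start om j) - spider_V0 g n (marg Sout) S (epoch_start om j)))\<^sup>2))"
    using expect_outer_batch[OF assms, where h = "\<lambda>om. epoch_start om j"
        and \<phi> = "\<lambda>x S. (norm (grad_avg x - spider_V0 g n (marg Sout) S x))\<^sup>2"]
      epoch_start_outer_update assms by auto
  also have "\<dots> \<le> expect (\<lambda>_. Q')"
    by (intro expectation_finite_pmf_mono finite_samples V0_variance)
  finally show ?thesis by simp
qed

lemma error_growth:
  assumes "j \<in> {1..J}" and "t < m"
  shows "expect (\<lambda>om. (norm (grad_avg (x_cur om j (Suc t)) - V_cur om j (Suc t)))\<^sup>2)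
    \<le> expect (\<lambda>om. (norm (grad_avg (x_cur om j t) - V_cur om j t))\<^sup>2)
      + Q * expect (\<lambda>om. (norm (x_next om j t - x_cur om j t))\<^sup>2)"
proof -
  define \<psi> where "\<psi> s S = (norm (grad_avg (fst (snd s)) - ((\<Sum>i\<in>S. (1 / (real n * marg Sin i)) *\<^sub>R
      (g i (fst (snd s)) - g i (fst s))) + snd (snd s))))\<^sup>2" for s :: "'a \<times> 'a \<times> 'a" and S
  have "expect (\<lambda>om. (norm (grad_avg (x_cur om j (Suc t)) - V_cur om j (Suc t)))\<^sup>2)
      = expect (\<lambda>om. \<psi> (inner_state om j t) (snd om (j, Suc t)))"
    unfolding \<psi>_def by (simp add: inner_state_Suc flip: x_cur_def x_next_def V_cur_def)
  also have "\<dots> = expect (\<lambda>om. measure_pmf.expectation Sin (\<psi> (inner_state om j t)))"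
    using assms inner_state_inner_update by (intro expect_inner_batch) auto
  also have "\<dots> \<le> expect (\<lambda>om. (norm (grad_avg (x_cur om j t) - V_cur om j t))\<^sup>2
      + Q * (norm (x_next om j t - x_cur om j t))\<^sup>2)"
    unfolding \<psi>_def x_cur_def x_next_def V_cur_def
    by (intro expectation_finite_pmf_mono finite_samples spider_update_variance)
  finally show ?thesis by simp
qed

lemma stationarity_step_bound:
  "(infdist 0 (frechet_subdiff objective (x_next om j (Suc t))))\<^sup>2
   \<le> 2 * (norm (grad_avg (x_cur om j (Suc t)) - V_cur om j (Suc t)))\<^sup>2
     + (2 / \<eta> + 4 * Lt) * (objective (x_cur om j (Suc t)) - objective (x_next om j (Suc t)))
     - 2 * real m * Q * (norm (x_next om j (Suc t) - x_cur om j (Suc t)))\<^sup>2"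
proof -
  have "x_next om j (Suc t) \<in> prox_set r (1 / (1 / \<eta>)) (x_cur om j (Suc t) - (1 / (1 / \<eta>)) *\<^sub>R V_cur om j (Suc t))"
    using prox_sel by (simp add: inner_state_Suc(3))
  from prox_gradient_step_bound[OF f_avg_gradient grad_avg_lipschitz Lt_pos inverse_\<eta>_ge this]
  show ?thesis
    by (simp add: objective_def[abs_def] Lt_times_excess)
qed

lemma epoch_bound:
  assumes j: "j \<in> {1..J}"
  shows "(\<Sum>t=1..m. expect (\<lambda>om. (infdist 0 (frechet_subdiff objective (x_next om j t)))\<^sup>2))
    \<le> 2 * real m * Q' + (2 / \<eta> + 4 * Lt) *
        (expect (\<lambda>om. objective (epoch_start om j)) - expect (\<lambda>om. objective (epoch_start om (Suc j))))"
proof -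
  define U where "U t = expect (\<lambda>om. (norm (grad_avg (x_cur om j t) - V_cur om j t))\<^sup>2)" for t
  define D where "D t = expect (\<lambda>om. (norm (x_next om j t - x_cur om j t))\<^sup>2)" for t
  define a where "a t = expect (\<lambda>om. objective (x_cur om j t))" for t
  have "(\<Sum>t=1..m. expect (\<lambda>om. (infdist 0 (frechet_subdiff objective (x_next om j t)))\<^sup>2))
      \<le> 2 * real m * Q' + (2 / \<eta> + 4 * Lt) * (a 1 - a (Suc m))"
  proof (rule epoch_sum_bound)
    show "U 0 \<le> Q'" unfolding U_def by (rule initial_error_bound[OF j])
    show "U (Suc t) \<le> U t + Q * D t" if "t < m" for t
      unfolding U_def D_def by (rule error_growth[OF j that])
    show "D 0 = 0" by (simp add: D_def)
    show "D t \<ge> 0" for t unfolding D_def by (intro integral_nonneg_AE) simp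
    show "Q \<ge> 0" by (rule Q_nonneg)
    fix t assume "1 \<le> t" "t \<le> m"
    then obtain k where t: "t = Suc k" by (cases t) auto
    have "expect (\<lambda>om. (infdist 0 (frechet_subdiff objective (x_next om j t)))\<^sup>2)
        \<le> expect (\<lambda>om. 2 * (norm (grad_avg (x_cur om j t) - V_cur om j t))\<^sup>2
            + (2 / \<eta> + 4 * Lt) * (objective (x_cur om j t) - objective (x_cur om j (Suc t)))
            - 2 * real m * Q * (norm (x_next om j t - x_cur om j t))\<^sup>2)"
      unfolding t inner_state_Suc(1)[of _ j "Suc k"]
      by (intro expectation_finite_pmf_mono finite_samples stationarity_step_bound)
    also have "\<dots> = 2 * U t + (2 / \<eta> + 4 * Lt) * (a t - a (Suc t)) - 2 * real m * Q * D t"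
      by (simp add: U_def D_def a_def)
    finally show "expect (\<lambda>om. (infdist 0 (frechet_subdiff objective (x_next om j t)))\<^sup>2)
        \<le> 2 * U t + (2 / \<eta> + 4 * Lt) * (a t - a (Suc t)) - 2 * real m * Q * D t" .
  qed
  moreover have "a 1 = expect (\<lambda>om. objective (epoch_start om j))"
    by (simp add: a_def inner_state_Suc(1)[of _ j 0, simplified])
  moreover have "a (Suc m) = expect (\<lambda>om. objective (epoch_start om (Suc j)))"
    using j by (simp add: a_def inner_state_Suc(1) epoch_start_Suc)
  ultimately show ?thesis by simp
qed

lemma stationarity_sum_bound:
  assumes min: "\<And>x. objective xstar \<le> objective x"
  shows "(\<Sum>j=1..J. \<Sum>t=1..m. expect (\<lambda>om. (infdist 0 (frechet_subdiff objective (x_next om j t)))\<^sup>2))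
    \<le> 2 * real m * real J * Q' + (2 / \<eta> + 4 * Lt) * (objective x1 - objective xstar)"
proof -
  define b where "b j = expect (\<lambda>om. objective (epoch_start om j))" for j
  have "(\<Sum>j=1..J. \<Sum>t=1..m. expect (\<lambda>om. (infdist 0 (frechet_subdiff objective (x_next om j t)))\<^sup>2))
      \<le> (\<Sum>j=1..J. 2 * real m * Q' + (2 / \<eta> + 4 * Lt) * (b j - b (Suc j)))"
    unfolding b_def by (intro sum_mono epoch_bound)
  also have "\<dots> = (\<Sum>j=1..J. 2 * real m * Q') + (2 / \<eta> + 4 * Lt) * (\<Sum>j=1..J. b j - b (Suc j))"
    by (simp only: sum.distrib sum_distrib_left)
  also have "\<dots> = 2 * real m * real J * Q' + (2 / \<eta> + 4 * Lt) * (b 1 - b (Suc J))"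
    unfolding sum_diff_Suc_atLeastAtMost by simp
  also have "b 1 = objective x1"
    unfolding b_def epoch_start_1 by simp
  also have "(2 / \<eta> + 4 * Lt) * (objective x1 - b (Suc J)) \<le> (2 / \<eta> + 4 * Lt) * (objective x1 - objective xstar)"
  proof (rule mult_left_mono)
    have "objective xstar \<le> b (Suc J)"
      using expectation_finite_pmf_mono[OF finite_samples, of "\<lambda>_. objective xstar"] min by (simp add: b_def)
    then show "objective x1 - b (Suc J) \<le> objective x1 - objective xstar" by simp
    show "0 \<le> 2 / \<eta> + 4 * Lt"
      using inverse_\<eta>_ge Lt_pos by simp
  qed
  finally show ?thesis by simp
qed

text \<open>The argument gives the weight \<open>2/\<eta> + 4 Lt = 12 Lt + 4 m Q / Lt\<close>, which is below the
  constant of the statement.\<close>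
lemma step_weight_le: "2 / \<eta> + 4 * Lt \<le> 24 * Lt + 4 * real m * Q / Lt"
proof -
  have "2 / \<eta> = 2 * (1 / \<eta>)"
    by simp
  also have "\<dots> = 8 * Lt + 4 * real m * Q / Lt"
    unfolding inverse_\<eta> by (simp add: algebra_simps)
  finally show ?thesis
    using Lt_pos by simp
qed

theorem average_stationarity_bound:
  assumes "\<And>x. objective xstar \<le> objective x"
  shows "(1 / (real m * real J)) *
           (\<Sum>j=1..J. \<Sum>t=1..m.
              measure_pmf.expectation (spider_samples Sout Sin J m)
                (\<lambda>(outS, inS). (infdist 0 (frechet_subdiff objective
                   (spider_x g n (marg Sin) (marg Sout) prox \<eta> m outS (curry inS) x1 j t)))\<^sup>2))
         \<le> (1 / (real m * real J)) * (24 * Lt + 4 * real m * Q / Lt) * (objective x1 - objective xstar) + 2 * Q'"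
proof (cases "m = 0 \<or> J = 0")
  case True
  then show ?thesis using Q'_nonneg by auto
next
  case False
  have "(2 / \<eta> + 4 * Lt) * (objective x1 - objective xstar)
      \<le> (24 * Lt + 4 * real m * Q / Lt) * (objective x1 - objective xstar)"
    using assms[of x1] step_weight_le by (intro mult_right_mono) auto
  with stationarity_sum_bound[OF assms] False show ?thesis
    by (simp add: spider_x_eq_x_next case_prod_unfold field_simps)
qed

end

theorem theorem6p3:
  fixes n m J :: nat
    and f :: "nat \<Rightarrow> 'a::euclidean_space \<Rightarrow> real"
    and g :: "nat \<Rightarrow> 'a \<Rightarrow> 'a"
    and r :: "'a \<Rightarrow> real"
    and G L :: "nat \<Rightarrow> real"
    and Sout Sin :: "nat set pmf"
    and v v' :: "nat \<Rightarrow> real"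
    and prox :: "'a \<Rightarrow> 'a"
    and x1 xstar :: 'a
    and F :: "'a \<Rightarrow> real"
    and Lt Q Q' \<eta> :: real
  defines "F \<equiv> \<lambda>x. (1 / real n) * (\<Sum>i<n. f i x) + r x"
    and "Lt \<equiv> (1 / real n) * (\<Sum>i<n. L i)"
    and "Q \<equiv> (\<Sum>i<n. v i * (L i)\<^sup>2 / (marg Sin i * (real n)\<^sup>2))"
    and "Q' \<equiv> (\<Sum>i<n. v' i * (G i)\<^sup>2 / (marg Sout i * (real n)\<^sup>2))"
    and "\<eta> \<equiv> 1 / (4 * Lt + 2 * real m * Q / Lt)"
  assumes grad: "\<And>i x. i < n \<Longrightarrow> GDERIV (f i) x :> g i x"
    and bounded: "\<And>i x. i < n \<Longrightarrow> norm (g i x) \<le> G i"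
    and lipschitz: "\<And>i x y. i < n \<Longrightarrow> norm (g i x - g i y) \<le> L i * norm (x - y)"
    and prox_sel: "\<And>y. prox y \<in> prox_set r \<eta> y"
    and min: "\<And>x. F xstar \<le> F x"
    and Lt_pos: "Lt > 0"
    and out_proper: "proper_sampling n Sout"
    and out_eso: "eso n Sout v'"
    and in_proper: "proper_sampling n Sin"
    and in_eso: "eso n Sin v"
  shows "(1 / (real m * real J)) *
           (\<Sum>j=1..J. \<Sum>t=1..m.
              measure_pmf.expectation (spider_samples Sout Sin J m)
                (\<lambda>(outS, inS). (infdist 0 (frechet_subdiff F
                   (spider_x g n (marg Sin) (marg Sout) prox \<eta> m outS (curry inS) x1 j t)))\<^sup>2))
         \<le> (1 / (real m * real J)) * (24 * Lt + 4 * real m * Q / Lt) * (F x1 - F xstar) + 2 * Q'"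
proof -
  interpret prox_spider n m J f g r G L Sout Sin v v' prox x1 Lt Q Q' \<eta>
    using grad bounded lipschitz prox_sel Lt_pos out_proper out_eso in_proper in_eso
    by unfold_locales (simp_all add: assms(2-5))
  have "F = objective"
    by (simp add: assms(1) fun_eq_iff objective_def f_avg_def)
  then show ?thesis
    using average_stationarity_bound min by simp
qed

end
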